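(* In ZFC, there exists a Hausdorff topological group which is selectively pseudocompact but not countably pracompact.
   Context: All spaces are Tychonoff. $\omega^*$ denotes the set of free (non-principal) ultrafilters on $\omega$. For $p\in\omega^*$, a point $x$ of a space $X$ is the $p$-limit of a sequence $(x_n)_{n\in\omega}$ in $X$, written $x=p\text{-}\lim_{n\in\omega}x_n$, if for every neighborhood $U$ of $x$ the set $\{n\in\omega: x_n\in U\}$ belongs to $p$. A space $X$ is selectively pseudocompact if for every sequence $(U_n)_{n\in\omega}$ of nonempty open subsets of $X$ there exist points $x_n\in U_n$ ($n\in\omega$), a point $x\in X$ and $p\in\omega^*$ with $x=p\text{-}\lim_{n\in\omega}x_n$. A space $X$ is countably pracompact if there is a dense subset $D\subseteq X$ such that every infinite subset of $D$ has an accumulation point in $X$. *)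

theory Defs
  imports "HOL-Analysis.Analysis" "HOL-Algebra.Group"
begin

definition free_ultrafilter :: "nat set set \<Rightarrow> bool" where
  "free_ultrafilter p \<longleftrightarrow>
     {} \<notin> p \<and> UNIV \<in> p \<and>
     (\<forall>A B. A \<in> p \<and> B \<in> p \<longrightarrow> A \<inter> B \<in> p) \<and>
     (\<forall>A B. A \<in> p \<and> A \<subseteq> B \<longrightarrow> B \<in> p) \<and>
     (\<forall>A. A \<in> p \<or> - A \<in> p) \<and>
     (\<forall>A. finite A \<longrightarrow> A \<notin> p)"

definition p_limit :: "'a topology \<Rightarrow> nat set set \<Rightarrow> (nat \<Rightarrow> 'a) \<Rightarrow> 'a \<Rightarrow> bool" where
  "p_limit X p f x \<longleftrightarrow> x \<in> topspace X \<and>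
     (\<forall>U. openin X U \<and> x \<in> U \<longrightarrow> {n. f n \<in> U} \<in> p)"

definition selectively_pseudocompact :: "'a topology \<Rightarrow> bool" where
  "selectively_pseudocompact X \<longleftrightarrow>
     (\<forall>U :: nat \<Rightarrow> 'a set. (\<forall>n. openin X (U n) \<and> U n \<noteq> {}) \<longrightarrow>
        (\<exists>f x p. (\<forall>n. f n \<in> U n) \<and> x \<in> topspace X \<and> free_ultrafilter p \<and> p_limit X p f x))"

definition countably_pracompact :: "'a topology \<Rightarrow> bool" where
  "countably_pracompact X \<longleftrightarrow>
     (\<exists>D. D \<subseteq> topspace X \<and> X closure_of D = topspace X \<and>
        (\<forall>A. A \<subseteq> D \<and> infinite A \<longrightarrow> X derived_set_of A \<noteq> {}))"

definition topological_group :: "('a, 'b) monoid_scheme \<Rightarrow> 'a topology \<Rightarrow> bool" where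
  "topological_group G X \<longleftrightarrow> group G \<and> topspace X = carrier G \<and>
     continuous_map (prod_topology X X) X (\<lambda>(x, y). x \<otimes>\<^bsub>G\<^esub> y) \<and>
     continuous_map X X (\<lambda>x. inv\<^bsub>G\<^esub> x)"

end

theory Submission
  imports Defs "HOL-Library.Z2" "HOL-Library.Function_Algebras"
begin

(*
  The group consists of countable subsets of an index set I under symmetric difference, with
  the topology of pointwise convergence inherited from 2^I. Fix continuum many pairwise disjoint
  countably infinite blocks B a in I. The indicators of singletons and of blocks are linearly
  independent over Z/2, so extending from a Hamel basis gives a homomorphism phi from
  (Pow I, sym_diff) to Z/2 that vanishes on finite sets and is 1 on every block. The group is
  the set of countable x with phi x = 0.

  Selective pseudocompactness: shrink each open U n to a basic cylinder around a finite set;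
  along a free ultrafilter p these finite sets converge pointwise to a countable set y. If
  phi y = 1, add to the n-th set the first n points of a block avoiding all the (countably
  many) cylinder coordinates; the approximants stay in U n and the limit moves into the group.

  No dense subset D witnesses countable pracompactness: a block z is countable, lies outside
  the group and in the closure of D. Since everything involved is countable, a diagonal
  argument gives a sequence in D converging pointwise to z, and as z is not in the group its
  range is an infinite subset of D without accumulation points.
*)

section \<open>Free ultrafilters on the natural numbers\<close>

definition free_filter :: "nat set set \<Rightarrow> bool" where
  "free_filter F \<longleftrightarrow> {} \<notin> F \<and> (\<forall>A B. A \<in> F \<and> B \<in> F \<longrightarrow> A \<inter> B \<in> F) \<and>
     (\<forall>A B. A \<in> F \<and> A \<subseteq> B \<longrightarrow> B \<in> F) \<and> (\<forall>A. finite (- A) \<longrightarrow> A \<in> F)"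

lemma free_filter_Union_chain:
  assumes "C \<noteq> {}" and chain: "subset.chain {F. free_filter F} C"
  shows "free_filter (\<Union>C)"
proof -
  have "A \<inter> B \<in> \<Union>C" if AB: "A \<in> \<Union>C" "B \<in> \<Union>C" for A B
  proof -
    obtain F G where FG: "F \<in> C" "G \<in> C" and "A \<in> F" "B \<in> G"
      using AB by blast
    moreover from chain FG have "F \<subseteq> G \<or> G \<subseteq> F" "free_filter F" "free_filter G"
      by (auto simp: subset_chain_def)
    ultimately show ?thesis
      unfolding free_filter_def by (metis UnionI subsetD)
  qed
  moreover have "free_filter F" if "F \<in> C" for F
    using chain that by (auto simp: subset_chain_def)
  ultimately show ?thesis
    using \<open>C \<noteq> {}\<close> unfolding free_filter_def by (metis UnionE UnionI ex_in_conv)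
qed

lemma free_filter_extend:
  assumes F: "free_filter F" and A: "\<forall>B\<in>F. B \<inter> A \<noteq> {}"
  shows "free_filter {C. \<exists>B\<in>F. B \<inter> A \<subseteq> C}"
  unfolding free_filter_def
proof (intro conjI allI impI)
  fix C1 C2 assume "C1 \<in> {C. \<exists>B\<in>F. B \<inter> A \<subseteq> C} \<and> C2 \<in> {C. \<exists>B\<in>F. B \<inter> A \<subseteq> C}"
  then obtain B1 B2 where "B1 \<in> F" "B2 \<in> F" "B1 \<inter> A \<subseteq> C1" "B2 \<inter> A \<subseteq> C2"
    by auto
  moreover from F \<open>B1 \<in> F\<close> \<open>B2 \<in> F\<close> have "B1 \<inter> B2 \<in> F"
    unfolding free_filter_def by simp
  ultimately show "C1 \<inter> C2 \<in> {C. \<exists>B\<in>F. B \<inter> A \<subseteq> C}"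
    by (intro CollectI bexI[of _ "B1 \<inter> B2"]) auto
next
  fix X :: "nat set" assume "finite (- X)"
  with F have "X \<in> F"
    unfolding free_filter_def by simp
  then show "X \<in> {C. \<exists>B\<in>F. B \<inter> A \<subseteq> C}"
    by auto
qed (use A in auto)

lemma maximal_free_filter_free_ultrafilter:
  assumes M: "free_filter M" and max: "\<And>F. free_filter F \<Longrightarrow> M \<subseteq> F \<Longrightarrow> F = M"
  shows "free_ultrafilter M"
proof -
  from M have "UNIV \<in> M"
    unfolding free_filter_def by simp
  have "A \<in> M \<or> - A \<in> M" for A
  proof (cases "\<forall>B\<in>M. B \<inter> A \<noteq> {}")
    case True
    moreover have "M \<subseteq> {C. \<exists>B\<in>M. B \<inter> A \<subseteq> C}"
      by blast
    ultimately have "{C. \<exists>B\<in>M. B \<inter> A \<subseteq> C} = M"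
      using max free_filter_extend[OF M] by simp
    with \<open>UNIV \<in> M\<close> show ?thesis
      by blast
  next
    case False
    then obtain B where "B \<in> M" "B \<subseteq> - A"
      by blast
    with M show ?thesis
      unfolding free_filter_def by simp
  qed
  moreover have "A \<notin> M" if "finite A" for A
  proof
    assume "A \<in> M"
    moreover from M \<open>finite A\<close> have "- A \<in> M"
      unfolding free_filter_def by simp
    ultimately have "A \<inter> - A \<in> M"
      using M unfolding free_filter_def by blast
    with M show False
      unfolding free_filter_def by simp
  qed
  ultimately show ?thesis
    using M \<open>UNIV \<in> M\<close> unfolding free_filter_def free_ultrafilter_def by simp
qed

lemma free_ultrafilter_exists: "\<exists>p. free_ultrafilter p"
proof -
  have "\<exists>M\<in>{F. free_filter F}. \<forall>F\<in>{F. free_filter F}. M \<subseteq> F \<longrightarrow> F = M"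
  proof (rule subset_Zorn_nonempty)
    have "free_filter {A. finite (- A)}"
      unfolding free_filter_def by (auto simp: Compl_Int intro: finite_subset)
    then show "{F. free_filter F} \<noteq> {}"
      by blast
    show "\<Union>C \<in> {F. free_filter F}" if "C \<noteq> {}" "subset.chain {F. free_filter F} C" for C
      using free_filter_Union_chain[OF that] by simp
  qed
  then obtain M where "free_filter M" "\<And>F. free_filter F \<Longrightarrow> M \<subseteq> F \<Longrightarrow> F = M"
    by auto
  then have "free_ultrafilter M"
    by (rule maximal_free_filter_free_ultrafilter)
  then show ?thesis ..
qed

definition filter_of :: "nat set set \<Rightarrow> nat filter" where
  "filter_of p = Abs_filter (\<lambda>P. {n. P n} \<in> p)"

lemma eventually_filter_of:
  assumes "free_ultrafilter p"
  shows "eventually P (filter_of p) \<longleftrightarrow> {n. P n} \<in> p"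
  unfolding filter_of_def
proof (rule eventually_Abs_filter, unfold_locales)
  show "{n. True} \<in> p"
    using assms unfolding free_ultrafilter_def by simp
  show "{n. P n \<and> Q n} \<in> p" if "{n. P n} \<in> p" "{n. Q n} \<in> p" for P Q
    using assms that unfolding free_ultrafilter_def Collect_conj_eq by simp
  show "{n. Q n} \<in> p" if "\<forall>n. P n \<longrightarrow> Q n" "{n. P n} \<in> p" for P Q
  proof -
    from that(1) have "{n. P n} \<subseteq> {n. Q n}"
      by blast
    with assms that(2) show ?thesis
      unfolding free_ultrafilter_def by blast
  qed
qed

lemma filter_of_neq_bot: "free_ultrafilter p \<Longrightarrow> filter_of p \<noteq> bot"
  unfolding trivial_limit_def by (simp add: eventually_filter_of free_ultrafilter_def)

lemma filter_of_le_sequentially: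
  assumes p: "free_ultrafilter p"
  shows "filter_of p \<le> sequentially"
proof (rule filter_leI)
  fix P assume "eventually P sequentially"
  then obtain N where "\<forall>n\<ge>N. P n"
    by (auto simp: eventually_sequentially)
  then have "- {..<N} \<subseteq> {n. P n}"
    by auto
  moreover from p have "{..<N} \<notin> p"
    unfolding free_ultrafilter_def by blast
  with p have "- {..<N} \<in> p"
    unfolding free_ultrafilter_def by blast
  ultimately show "eventually P (filter_of p)"
    using p unfolding eventually_filter_of[OF p] free_ultrafilter_def by blast
qed

lemma eventually_filter_of_Not:
  assumes p: "free_ultrafilter p" and "\<not> eventually P (filter_of p)"
  shows "eventually (\<lambda>n. \<not> P n) (filter_of p)"
  using assms unfolding eventually_filter_of[OF p] free_ultrafilter_def Collect_neg_eq
  by blast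

lemma p_limit_iff_limitin:
  "free_ultrafilter p \<Longrightarrow> p_limit X p f x \<longleftrightarrow> limitin X f x (filter_of p)"
  unfolding p_limit_def limitin_def eventually_filter_of by simp

definition ultralimit :: "nat set set \<Rightarrow> (nat \<Rightarrow> 'a set) \<Rightarrow> 'a set" where
  "ultralimit p b = {i. eventually (\<lambda>n. i \<in> b n) (filter_of p)}"

lemma eventually_mem_ultralimit:
  assumes "free_ultrafilter p"
  shows "eventually (\<lambda>n. i \<in> b n \<longleftrightarrow> i \<in> ultralimit p b) (filter_of p)"
  using eventually_filter_of_Not[OF assms, of "\<lambda>n. i \<in> b n"]
  by (cases "i \<in> ultralimit p b") (auto simp: ultralimit_def)

lemma ultralimit_subset:
  assumes "free_ultrafilter p"
  shows "ultralimit p b \<subseteq> (\<Union>n. b n)"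
  unfolding ultralimit_def using eventually_happens'[OF filter_of_neq_bot[OF assms]] by blast

section \<open>Pointwise convergence on families of sets\<close>

definition cylinder :: "'a set set \<Rightarrow> 'a set \<Rightarrow> 'a set \<Rightarrow> 'a set set" where
  "cylinder S x F = {y \<in> S. \<forall>i\<in>F. i \<in> y \<longleftrightarrow> i \<in> x}"

(* Sets are identified with their indicators in 2^I: this is the product topology of 2^I
   restricted to S, the cylinders being the basic open sets. *)
definition pointwise_topology :: "'a set set \<Rightarrow> 'a set topology" where
  "pointwise_topology S =
     topology (\<lambda>U. U \<subseteq> S \<and> (\<forall>x\<in>U. \<exists>F. finite F \<and> cylinder S x F \<subseteq> U))"

lemma cylinder_antimono: "F \<subseteq> G \<Longrightarrow> cylinder S x G \<subseteq> cylinder S x F"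
  unfolding cylinder_def by blast

lemma istopology_cylinders:
  "istopology (\<lambda>U. U \<subseteq> S \<and> (\<forall>x\<in>U. \<exists>F. finite F \<and> cylinder S x F \<subseteq> U))"
  unfolding istopology_def
proof (rule conjI; intro allI impI)
  fix U V
  assume U: "U \<subseteq> S \<and> (\<forall>x\<in>U. \<exists>F. finite F \<and> cylinder S x F \<subseteq> U)"
    and V: "V \<subseteq> S \<and> (\<forall>x\<in>V. \<exists>F. finite F \<and> cylinder S x F \<subseteq> V)"
  have "\<exists>F. finite F \<and> cylinder S x F \<subseteq> U \<inter> V" if "x \<in> U \<inter> V" for x
  proof -
    obtain F G where "finite F" "cylinder S x F \<subseteq> U" "finite G" "cylinder S x G \<subseteq> V"
      using U V \<open>x \<in> U \<inter> V\<close> by blast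
    moreover have "cylinder S x (F \<union> G) \<subseteq> cylinder S x F \<inter> cylinder S x G"
      using cylinder_antimono[of F "F \<union> G"] cylinder_antimono[of G "F \<union> G"] by blast
    ultimately show ?thesis
      by (intro exI[of _ "F \<union> G"]) blast
  qed
  with U show "U \<inter> V \<subseteq> S \<and> (\<forall>x\<in>U \<inter> V. \<exists>F. finite F \<and> cylinder S x F \<subseteq> U \<inter> V)"
    by blast
next
  fix K assume K: "\<forall>U\<in>K. U \<subseteq> S \<and> (\<forall>x\<in>U. \<exists>F. finite F \<and> cylinder S x F \<subseteq> U)"
  have "\<exists>F. finite F \<and> cylinder S x F \<subseteq> \<Union>K" if "x \<in> \<Union>K" for x
  proof -
    from that obtain U where "U \<in> K" "x \<in> U"
      by blast
    with K obtain F where "finite F" "cylinder S x F \<subseteq> U"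
      by blast
    with \<open>U \<in> K\<close> show ?thesis
      by blast
  qed
  with K show "\<Union>K \<subseteq> S \<and> (\<forall>x\<in>\<Union>K. \<exists>F. finite F \<and> cylinder S x F \<subseteq> \<Union>K)"
    by blast
qed

lemma openin_pointwise_topology:
  "openin (pointwise_topology S) U \<longleftrightarrow> U \<subseteq> S \<and> (\<forall>x\<in>U. \<exists>F. finite F \<and> cylinder S x F \<subseteq> U)"
  unfolding pointwise_topology_def using istopology_cylinders[of S] by simp

lemma openin_cylinder:
  assumes "finite F"
  shows "openin (pointwise_topology S) (cylinder S x F)"
  unfolding openin_pointwise_topology
proof (intro conjI ballI)
  show "cylinder S x F \<subseteq> S"
    by (auto simp: cylinder_def)
  fix y assume "y \<in> cylinder S x F"
  then show "\<exists>G. finite G \<and> cylinder S y G \<subseteq> cylinder S x F"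
    using assms by (intro exI[of _ F]) (auto simp: cylinder_def)
qed

lemma topspace_pointwise_topology [simp]: "topspace (pointwise_topology S) = S"
proof -
  have "openin (pointwise_topology S) S"
    unfolding openin_pointwise_topology cylinder_def by (auto intro!: exI[of _ "{}"])
  then have "S \<subseteq> topspace (pointwise_topology S)"
    by (rule openin_subset)
  moreover have "topspace (pointwise_topology S) \<subseteq> S"
    using openin_topspace[of "pointwise_topology S"] unfolding openin_pointwise_topology by simp
  ultimately show ?thesis
    by (rule subset_antisym[rotated])
qed

lemma Hausdorff_space_pointwise_topology: "Hausdorff_space (pointwise_topology S)"
  unfolding Hausdorff_space_def
proof (intro allI impI)
  fix x y
  assume "x \<in> topspace (pointwise_topology S) \<and> y \<in> topspace (pointwise_topology S) \<and> x \<noteq> y"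
  then have "x \<in> S" "y \<in> S" "sym_diff x y \<noteq> {}"
    by auto
  then obtain i where "i \<in> sym_diff x y"
    by blast
  with \<open>x \<in> S\<close> \<open>y \<in> S\<close> have "x \<in> cylinder S x {i}" "y \<in> cylinder S y {i}"
    "disjnt (cylinder S x {i}) (cylinder S y {i})"
    unfolding cylinder_def disjnt_def by auto
  then show "\<exists>U V. openin (pointwise_topology S) U \<and> openin (pointwise_topology S) V \<and>
               x \<in> U \<and> y \<in> V \<and> disjnt U V"
    using openin_cylinder[of "{i}" S] by blast
qed

lemma limitin_pointwise_topologyI:
  assumes "x \<in> S" "eventually (\<lambda>n. f n \<in> S) F"
    and "\<And>i. eventually (\<lambda>n. i \<in> f n \<longleftrightarrow> i \<in> x) F"
  shows "limitin (pointwise_topology S) f x F"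
  unfolding limitin_def
proof (intro conjI allI impI)
  fix U assume "openin (pointwise_topology S) U \<and> x \<in> U"
  then obtain E where "finite E" "cylinder S x E \<subseteq> U"
    unfolding openin_pointwise_topology by blast
  have "eventually (\<lambda>n. \<forall>i\<in>E. i \<in> f n \<longleftrightarrow> i \<in> x) F"
    using \<open>finite E\<close> assms(3) by (simp add: eventually_ball_finite)
  with assms(2) show "eventually (\<lambda>n. f n \<in> U) F"
    by eventually_elim (use \<open>cylinder S x E \<subseteq> U\<close> in \<open>auto simp: cylinder_def\<close>)
qed (use assms in simp)

lemma continuous_map_sym_diff:
  assumes closed: "\<And>x y. x \<in> S \<Longrightarrow> y \<in> S \<Longrightarrow> sym_diff x y \<in> S"
  shows "continuous_map (prod_topology (pointwise_topology S) (pointwise_topology S))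
           (pointwise_topology S) (\<lambda>(x, y). sym_diff x y)"
    (is "continuous_map (prod_topology ?X ?X) ?X _")
proof -
  have "openin (prod_topology ?X ?X) {z \<in> S \<times> S. sym_diff (fst z) (snd z) \<in> U}"
    if U: "openin ?X U" for U
    unfolding openin_prod_topology_alt
  proof (intro allI impI)
    fix x y assume "(x, y) \<in> {z \<in> S \<times> S. sym_diff (fst z) (snd z) \<in> U}"
    then obtain F where "x \<in> S" "y \<in> S" "finite F" "cylinder S (sym_diff x y) F \<subseteq> U"
      using U unfolding openin_pointwise_topology by auto
    moreover have "sym_diff a b \<in> cylinder S (sym_diff x y) F"
      if "a \<in> cylinder S x F" "b \<in> cylinder S y F" for a b
      using that closed unfolding cylinder_def by auto
    ultimately have "cylinder S x F \<times> cylinder S y F \<subseteq> {z \<in> S \<times> S. sym_diff (fst z) (snd z) \<in> U}"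
      by (auto simp: cylinder_def)
    moreover have "x \<in> cylinder S x F" "y \<in> cylinder S y F"
      using \<open>x \<in> S\<close> \<open>y \<in> S\<close> by (simp_all add: cylinder_def)
    ultimately show "\<exists>A B. openin ?X A \<and> openin ?X B \<and> x \<in> A \<and> y \<in> B \<and>
                       A \<times> B \<subseteq> {z \<in> S \<times> S. sym_diff (fst z) (snd z) \<in> U}"
      using openin_cylinder[OF \<open>finite F\<close>] by blast
  qed
  then show ?thesis
    using closed by (auto simp: continuous_map_def case_prod_unfold)
qed

lemma topological_group_sym_diff:
  assumes "{} \<in> S" and closed: "\<And>x y. x \<in> S \<Longrightarrow> y \<in> S \<Longrightarrow> sym_diff x y \<in> S"
  shows "topological_group \<lparr>carrier = S, mult = sym_diff, one = {}\<rparr> (pointwise_topology S)"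
    (is "topological_group ?G ?X")
proof -
  have group: "group ?G"
  proof (rule groupI)
    show "x \<otimes>\<^bsub>?G\<^esub> y \<otimes>\<^bsub>?G\<^esub> z = x \<otimes>\<^bsub>?G\<^esub> (y \<otimes>\<^bsub>?G\<^esub> z)" for x y z
      by auto
    show "\<exists>y\<in>carrier ?G. y \<otimes>\<^bsub>?G\<^esub> x = \<one>\<^bsub>?G\<^esub>" if "x \<in> carrier ?G" for x
      using that by auto
  qed (use assms in auto)
  have "inv\<^bsub>?G\<^esub> x = x" if "x \<in> S" for x
    by (rule group.inv_equality[OF group]) (use that in auto)
  then have "continuous_map ?X ?X (\<lambda>x. inv\<^bsub>?G\<^esub> x)"
    by (intro continuous_map_eq[OF continuous_map_id]) simp
  with group continuous_map_sym_diff[OF closed] show ?thesis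
    unfolding topological_group_def by simp
qed

lemma derived_set_of_pointwise_limit_outside:
  assumes "\<And>k. d k \<in> S" "z \<notin> S"
    and conv: "\<And>i. eventually (\<lambda>k. i \<in> d k \<longleftrightarrow> i \<in> z) sequentially"
  shows "pointwise_topology S derived_set_of range d = {}"
proof -
  have "w \<notin> pointwise_topology S derived_set_of range d" for w
  proof
    assume w: "w \<in> pointwise_topology S derived_set_of range d"
    then have "w \<in> S"
      using derived_set_of_subset_topspace by fastforce
    with \<open>z \<notin> S\<close> have "sym_diff w z \<noteq> {}"
      by auto
    then obtain i where i: "i \<in> sym_diff w z"
      by blast
    from conv[of i] obtain N where N: "\<And>k. k \<ge> N \<Longrightarrow> i \<in> d k \<longleftrightarrow> i \<in> z"
      by (auto simp: eventually_sequentially)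
    have "k < N" if "d k \<in> cylinder S w {i}" for k
    proof (rule ccontr)
      assume "\<not> k < N"
      with that i N show False
        by (auto simp: cylinder_def)
    qed
    then have "range d \<inter> cylinder S w {i} \<subseteq> d ` {..<N}"
      by auto
    then have "finite (range d \<inter> cylinder S w {i})"
      by (rule finite_subset) simp
    moreover have "w \<in> cylinder S w {i}"
      using \<open>w \<in> S\<close> by (simp add: cylinder_def)
    moreover have "openin (pointwise_topology S) (cylinder S w {i})"
      by (simp add: openin_cylinder)
    ultimately show False
      using w unfolding derived_set_of_infinite_openin[OF Hausdorff_space_pointwise_topology]
      by blast
  qed
  then show ?thesis
    by blast
qed

lemma infinite_range_pointwise_limit_outside:
  assumes "\<And>k. d k \<in> S" "z \<notin> S"
    and conv: "\<And>i. eventually (\<lambda>k. i \<in> d k \<longleftrightarrow> i \<in> z) sequentially"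
  shows "infinite (range d)"
proof
  assume "finite (range d)"
  have "eventually (\<lambda>k. d k \<noteq> v) sequentially" if "v \<in> range d" for v
  proof -
    from that assms(1,2) have "sym_diff v z \<noteq> {}"
      by auto
    then obtain i where "i \<in> sym_diff v z"
      by blast
    from conv[of i] show ?thesis
      by eventually_elim (use \<open>i \<in> sym_diff v z\<close> in auto)
  qed
  with \<open>finite (range d)\<close> have "eventually (\<lambda>k. \<forall>v\<in>range d. d k \<noteq> v) sequentially"
    by (intro eventually_ball_finite) auto
  then obtain N where "\<forall>n\<ge>N. \<forall>v\<in>range d. d n \<noteq> v"
    unfolding eventually_sequentially by blast
  then have "\<forall>v\<in>range d. d N \<noteq> v"
    by simp
  then show False
    by blast
qed

section \<open>Sequences converging to countable sets\<close>

definition initial_segment :: "'a set \<Rightarrow> nat \<Rightarrow> 'a set" where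
  "initial_segment T k = {i \<in> T. to_nat_on T i < k}"

lemma finite_initial_segment: "countable T \<Longrightarrow> finite (initial_segment T k)"
  unfolding initial_segment_def
  using finite_vimage_IntI[OF finite_lessThan[of k] inj_on_to_nat_on, of T]
  by (simp add: vimage_def Int_def conj_commute)

lemma initial_segment_subset: "initial_segment T k \<subseteq> T"
  by (simp add: initial_segment_def)

lemma eventually_mem_initial_segment:
  "eventually (\<lambda>k. i \<in> initial_segment T k \<longleftrightarrow> i \<in> T) sequentially"
  unfolding initial_segment_def eventually_sequentially
  by (auto intro!: exI[of _ "Suc (to_nat_on T i)"])

lemma eventually_mem_incseq:
  assumes "incseq A" "i \<in> (\<Union>n. A n)"
  shows "eventually (\<lambda>n. i \<in> A n) sequentially"
proof -
  from assms(2) obtain m where "i \<in> A m"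
    by blast
  with assms(1) show ?thesis
    unfolding eventually_sequentially incseq_def by blast
qed

definition finitary_step :: "('a set \<Rightarrow> 'a set) \<Rightarrow> 'a set \<Rightarrow> 'a set" where
  "finitary_step c X = X \<union> (\<Union>E\<in>{E. finite E \<and> E \<subseteq> X}. c E)"

definition finitary_closure :: "('a set \<Rightarrow> 'a set) \<Rightarrow> 'a set \<Rightarrow> 'a set" where
  "finitary_closure c z = (\<Union>n. (finitary_step c ^^ n) z)"

lemma subset_finitary_closure: "z \<subseteq> finitary_closure c z"
proof -
  have "z = (finitary_step c ^^ 0) z"
    by simp
  then show ?thesis
    unfolding finitary_closure_def by blast
qed

lemma countable_finitary_closure:
  assumes "countable z" and "\<And>E. finite E \<Longrightarrow> countable (c E)"
  shows "countable (finitary_closure c z)"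
proof -
  have "countable (finitary_step c X)" if "countable X" for X
    unfolding finitary_step_def
    by (intro countable_Un countable_UN countable_Collect_finite_subset that) (use assms(2) in auto)
  then have "countable ((finitary_step c ^^ n) z)" for n
    using assms(1) by (rule countable_funpow)
  then show ?thesis
    unfolding finitary_closure_def by blast
qed

lemma finitary_closure_closed:
  assumes "finite E" "E \<subseteq> finitary_closure c z"
  shows "c E \<subseteq> finitary_closure c z"
proof -
  have "incseq (\<lambda>n. (finitary_step c ^^ n) z)"
    by (rule incseq_SucI) (auto simp: finitary_step_def)
  from eventually_mem_incseq[OF this] assms(2)
  have "\<forall>i\<in>E. eventually (\<lambda>n. i \<in> (finitary_step c ^^ n) z) sequentially"
    unfolding finitary_closure_def by blast
  with \<open>finite E\<close> have "eventually (\<lambda>n. \<forall>i\<in>E. i \<in> (finitary_step c ^^ n) z) sequentially"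
    by (rule eventually_ball_finite)
  then obtain n where "E \<subseteq> (finitary_step c ^^ n) z"
    unfolding eventually_sequentially by blast
  with \<open>finite E\<close> have "c E \<subseteq> (finitary_step c ^^ Suc n) z"
    by (auto simp: finitary_step_def)
  then show ?thesis
    unfolding finitary_closure_def by blast
qed

lemma exists_pointwise_convergent_sequence:
  assumes approx: "\<And>E. finite E \<Longrightarrow> \<exists>d\<in>D. \<forall>i\<in>E. i \<in> d \<longleftrightarrow> i \<in> z"
    and "countable z" and countable_D: "\<And>d. d \<in> D \<Longrightarrow> countable d"
  shows "\<exists>d. range d \<subseteq> D \<and> (\<forall>i. eventually (\<lambda>k. i \<in> d k \<longleftrightarrow> i \<in> z) sequentially)"
proof -
  have "\<exists>c. \<forall>E. finite E \<longrightarrow> c E \<in> D \<and> (\<forall>i\<in>E. i \<in> c E \<longleftrightarrow> i \<in> z)"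
    using approx by (intro choice allI) blast
  then obtain c where c: "\<And>E. finite E \<Longrightarrow> c E \<in> D \<and> (\<forall>i\<in>E. i \<in> c E \<longleftrightarrow> i \<in> z)"
    by blast
  define T where "T = finitary_closure c z"
  have "countable T"
    unfolding T_def using \<open>countable z\<close> c countable_D by (intro countable_finitary_closure) auto
  have "z \<subseteq> T" and closed: "\<And>E. finite E \<Longrightarrow> E \<subseteq> T \<Longrightarrow> c E \<subseteq> T"
    unfolding T_def by (rule subset_finitary_closure, rule finitary_closure_closed)
  define d where "d k = c (initial_segment T k)" for k
  have d: "d k \<in> D" "\<forall>j\<in>initial_segment T k. j \<in> d k \<longleftrightarrow> j \<in> z" "d k \<subseteq> T" for k
    unfolding d_def using c closed[OF _ initial_segment_subset]
      finite_initial_segment[OF \<open>countable T\<close>] by simp_all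
  have "range d \<subseteq> D"
    using d(1) by blast
  moreover have "eventually (\<lambda>k. i \<in> d k \<longleftrightarrow> i \<in> z) sequentially" for i
  proof (cases "i \<in> T")
    case True
    from eventually_mem_initial_segment[of i T] show ?thesis
      by eventually_elim (use True d(2) in simp)
  next
    case False
    with d(3) \<open>z \<subseteq> T\<close> have "\<forall>k. i \<in> d k \<longleftrightarrow> i \<in> z"
      by blast
    then show ?thesis
      by simp
  qed
  ultimately show ?thesis
    by blast
qed

section \<open>A parity functional on the power set\<close>

definition scale_fun :: "bit \<Rightarrow> ('i \<Rightarrow> bit) \<Rightarrow> 'i \<Rightarrow> bit" where
  "scale_fun c f = (\<lambda>i. c * f i)"

lemma vector_space_scale_fun: "vector_space scale_fun"
  by unfold_locales (auto simp: scale_fun_def fun_eq_iff plus_fun_def ring_distribs)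

lemma sum_fun_apply: "(\<Sum>v\<in>t. g v) i = (\<Sum>v\<in>t. g v i)"
  for g :: "'a \<Rightarrow> 'i \<Rightarrow> 'b::comm_monoid_add"
  by (induction t rule: infinite_finite_induct) (simp_all add: plus_fun_def zero_fun_def)

lemma sum_neq_0_if_unique_point:
  fixes t :: "('i \<Rightarrow> bit) set"
  assumes "finite t" "w \<in> t" "w i = 1" "\<And>v. v \<in> t - {w} \<Longrightarrow> v i = 0"
  shows "(\<Sum>v\<in>t. v) \<noteq> 0"
proof
  assume "(\<Sum>v\<in>t. v) = 0"
  then have "(\<Sum>v\<in>t. v i) = 0"
    using sum_fun_apply[of "\<lambda>v. v" t i] by simp
  moreover have "(\<Sum>v\<in>t - {w}. v i) = 0"
    by (rule sum.neutral) (use assms(4) in blast)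
  ultimately show False
    using sum.remove[OF assms(1,2), of "\<lambda>v. v i"] assms(3) by simp
qed

lemma indicator_eq_indicator_iff:
  "(indicator A :: 'a \<Rightarrow> 'b::zero_neq_one) = indicator B \<longleftrightarrow> A = B"
  by (metis indicator_eq_1_iff set_eq_iff)

lemma private_point_of_block:
  fixes B :: "'a \<Rightarrow> 'i set"
  assumes disj: "disjoint_family B" and "infinite (B a)" and "finite t"
    and t: "t \<subseteq> range (\<lambda>i. indicator {i} :: 'i \<Rightarrow> bit) \<union> range (\<lambda>a. indicator (B a))"
  obtains i where "i \<in> B a" "\<And>v. v \<in> t - {indicator (B a)} \<Longrightarrow> v i = 0"
proof -
  have "finite {i. indicator {i} \<in> t}"
    using finite_vimageI[OF \<open>finite t\<close>, of "\<lambda>i. indicator {i} :: 'i \<Rightarrow> bit"]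
    by (simp add: vimage_def inj_def indicator_eq_indicator_iff)
  then have "B a - {i. indicator {i} \<in> t} \<noteq> {}"
    using Diff_infinite_finite \<open>infinite (B a)\<close> infinite_imp_nonempty by blast
  then obtain i where i: "i \<in> B a" "indicator {i} \<notin> t"
    by blast
  have "v i = 0" if v: "v \<in> t - {indicator (B a)}" for v
  proof -
    from v t consider (singleton) j where "v = indicator {j}" | (block) b where "v = indicator (B b)"
      by blast
    then show ?thesis
    proof cases
      case singleton
      with v i(2) have "j \<noteq> i"
        by auto
      with singleton show ?thesis
        by simp
    next
      case block
      with v have "b \<noteq> a"
        by auto
      with disj i(1) have "i \<notin> B b"
        unfolding disjoint_family_on_def by blast
      with block show ?thesis
        by simp
    qed
  qed
  with i(1) show thesis
    by (rule that)
qed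

lemma sum_indicators_singletons_blocks_neq_0:
  fixes B :: "'a \<Rightarrow> 'i set"
  assumes disj: "disjoint_family B" and inf: "\<And>a. infinite (B a)"
    and "finite t" "t \<noteq> {}"
    and t: "t \<subseteq> range (\<lambda>i. indicator {i} :: 'i \<Rightarrow> bit) \<union> range (\<lambda>a. indicator (B a))"
  shows "(\<Sum>v\<in>t. v) \<noteq> 0"
proof (cases "\<exists>a. indicator (B a) \<in> t")
  case True
  then obtain a where "indicator (B a) \<in> t"
    by blast
  moreover obtain i where "i \<in> B a" "\<And>v. v \<in> t - {indicator (B a)} \<Longrightarrow> v i = 0"
    using private_point_of_block[OF disj inf \<open>finite t\<close> t] by blast
  ultimately show ?thesis
    using \<open>finite t\<close> by (intro sum_neq_0_if_unique_point[of t "indicator (B a)" i]) simp_all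
next
  case False
  with \<open>t \<noteq> {}\<close> t obtain i0 where "indicator {i0} \<in> t"
    by blast
  moreover have "v i0 = 0" if v: "v \<in> t - {indicator {i0}}" for v
  proof -
    from v t False obtain j where "v = indicator {j}"
      by blast
    moreover from this v have "j \<noteq> i0"
      by auto
    ultimately show ?thesis
      by simp
  qed
  ultimately show ?thesis
    using \<open>finite t\<close> by (intro sum_neq_0_if_unique_point[of t "indicator {i0}" i0]) simp_all
qed

lemma independent_indicators_singletons_blocks:
  fixes B :: "'a \<Rightarrow> 'i set"
  assumes disj: "disjoint_family B" and inf: "\<And>a. infinite (B a)"
  shows "\<not> module.dependent scale_fun
           (range (\<lambda>i. indicator {i} :: 'i \<Rightarrow> bit) \<union> range (\<lambda>a. indicator (B a)))"
    (is "\<not> module.dependent scale_fun ?V")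
proof -
  interpret vector_space scale_fun
    by (rule vector_space_scale_fun)
  have "u v0 = 0"
    if t: "finite t" "t \<subseteq> ?V" and sum: "(\<Sum>v\<in>t. scale_fun (u v) v) = 0" and "v0 \<in> t" for t u v0
  proof (rule ccontr)
    assume "u v0 \<noteq> 0"
    have "scale_fun (u v) v = (if u v = 1 then v else 0)" for v
      by (cases "u v") (simp_all add: scale_fun_def fun_eq_iff)
    with sum have "(\<Sum>v\<in>{v \<in> t. u v = 1}. v) = 0"
      by (simp add: sum.inter_filter[OF t(1)])
    moreover have "{v \<in> t. u v = 1} \<noteq> {}"
      using \<open>v0 \<in> t\<close> \<open>u v0 \<noteq> 0\<close> by auto
    ultimately show False
      using sum_indicators_singletons_blocks_neq_0[OF disj inf, of "{v \<in> t. u v = 1}"] t by auto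
  qed
  then show ?thesis
    unfolding independent_explicit_module by blast
qed

lemma linear_functional_blocks_singletons:
  fixes B :: "'a \<Rightarrow> 'i set"
  assumes "disjoint_family B" and "\<And>a. infinite (B a)"
  shows "\<exists>g :: ('i \<Rightarrow> bit) \<Rightarrow> bit. Vector_Spaces.linear scale_fun (*) g \<and>
           (\<forall>a. g (indicator (B a)) = 1) \<and> (\<forall>i. g (indicator {i}) = 0)"
proof -
  have "vector_space_pair scale_fun ((*) :: bit \<Rightarrow> bit \<Rightarrow> bit)"
    unfolding vector_space_pair_def
    by (simp add: vector_space_scale_fun) (unfold_locales, auto simp: ring_distribs)
  from vector_space_pair.linear_independent_extend[OF this
      independent_indicators_singletons_blocks[OF assms],
      where f = "\<lambda>v. if v \<in> range (\<lambda>a. indicator (B a)) then 1 else 0"]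
  obtain g :: "('i \<Rightarrow> bit) \<Rightarrow> bit" where g: "Vector_Spaces.linear scale_fun (*) g"
    and g_basis: "\<forall>v \<in> range (\<lambda>i. indicator {i}) \<union> range (\<lambda>a. indicator (B a)).
      g v = (if v \<in> range (\<lambda>a. indicator (B a)) then 1 else 0)"
    by blast
  have "{i} \<noteq> B a" for i a
    using assms(2)[of a] by (metis finite.emptyI finite.insertI)
  then have "indicator {i} \<notin> range (\<lambda>a. indicator (B a) :: 'i \<Rightarrow> bit)" for i
    by (auto simp: indicator_eq_indicator_iff)
  with g g_basis show ?thesis
    by auto
qed

lemma parity_functional_exists:
  fixes B :: "'a \<Rightarrow> 'i set"
  assumes "disjoint_family B" and "\<And>a. infinite (B a)"
  shows "\<exists>\<phi>. (\<forall>x y. \<phi> (sym_diff x y) \<longleftrightarrow> \<phi> x \<noteq> \<phi> y) \<and> (\<forall>x. finite x \<longrightarrow> \<not> \<phi> x) \<and> (\<forall>a. \<phi> (B a))"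
proof -
  obtain g :: "('i \<Rightarrow> bit) \<Rightarrow> bit" where g: "Vector_Spaces.linear scale_fun (*) g"
    and g_blocks: "\<And>a. g (indicator (B a)) = 1" and g_singletons: "\<And>i. g (indicator {i}) = 0"
    using linear_functional_blocks_singletons[OF assms] by blast
  have g_add: "g (f + h) = g f + g h" for f h
    using g unfolding Vector_Spaces.linear_iff by blast
  define \<phi> where "\<phi> x \<longleftrightarrow> g (indicator x) = 1" for x :: "'i set"
  have indicator_sym_diff: "indicator (sym_diff x y) = indicator x + (indicator y :: 'i \<Rightarrow> bit)"
    for x y :: "'i set"
    by (auto simp: fun_eq_iff indicator_def)
  have \<phi>_sym_diff: "\<phi> (sym_diff x y) \<longleftrightarrow> \<phi> x \<noteq> \<phi> y" for x y
    unfolding \<phi>_def indicator_sym_diff g_add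
    by (cases "g (indicator x)"; cases "g (indicator y)") simp_all
  have "\<not> \<phi> x" if "finite x" for x
    using that
  proof (induction x rule: finite_induct)
    case empty
    have "g 0 = 0"
      using g_add[of 0 0] by simp
    moreover have "indicator {} = (0 :: 'i \<Rightarrow> bit)"
      by (simp add: fun_eq_iff)
    ultimately show ?case
      by (simp add: \<phi>_def)
  next
    case (insert i x)
    then have "insert i x = sym_diff {i} x"
      by auto
    with insert.IH show ?case
      using \<phi>_sym_diff g_singletons by (simp add: \<phi>_def)
  qed
  moreover have "\<phi> (B a)" for a
    by (simp add: \<phi>_def g_blocks)
  ultimately show ?thesis
    using \<phi>_sym_diff by blast
qed

section \<open>The kernel group\<close>

lemma uncountable_UNIV_nat_set: "uncountable (UNIV :: nat set set)"
proof
  assume "countable (UNIV :: nat set set)"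
  then have "range (from_nat_into (UNIV :: nat set set)) = Pow UNIV"
    by (simp add: range_from_nat_into)
  with Cantors_theorem show False
    by blast
qed

lemma disjoint_family_ex_disjoint:
  fixes B :: "'a \<Rightarrow> 'i set"
  assumes "disjoint_family B" "countable A" "uncountable (UNIV :: 'a set)"
  shows "\<exists>a. B a \<inter> A = {}"
proof (rule ccontr)
  assume "\<nexists>a. B a \<inter> A = {}"
  have "UNIV \<subseteq> (\<lambda>i. SOME a. i \<in> B a) ` A"
  proof
    fix a
    from \<open>\<nexists>a. B a \<inter> A = {}\<close> obtain i where i: "i \<in> B a" "i \<in> A"
      by blast
    have "(SOME a. i \<in> B a) = a"
    proof (rule some_equality)
      show "a' = a" if "i \<in> B a'" for a'
        using assms(1) i(1) that unfolding disjoint_family_on_def by blast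
    qed (rule i(1))
    with i show "a \<in> (\<lambda>i. SOME a. i \<in> B a) ` A"
      by blast
  qed
  with assms(2,3) show False
    using countable_subset by blast
qed

locale parity_kernel =
  fixes B :: "nat set \<Rightarrow> 'i set" and \<phi> :: "'i set \<Rightarrow> bool"
  assumes disjoint_blocks: "disjoint_family B"
    and countable_block: "countable (B a)"
    and \<phi>_sym_diff: "\<phi> (sym_diff x y) \<longleftrightarrow> \<phi> x \<noteq> \<phi> y"
    and \<phi>_finite: "finite x \<Longrightarrow> \<not> \<phi> x"
    and \<phi>_block: "\<phi> (B a)"
begin

definition kernel :: "'i set set" where
  "kernel = {x. countable x \<and> \<not> \<phi> x}"

lemma finite_in_kernel: "finite x \<Longrightarrow> x \<in> kernel"
  by (simp add: kernel_def \<phi>_finite countable_finite)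

lemma block_notin_kernel: "B a \<notin> kernel"
  by (simp add: kernel_def \<phi>_block)

lemma topological_group_kernel:
  "topological_group \<lparr>carrier = kernel, mult = sym_diff, one = {}\<rparr> (pointwise_topology kernel)"
proof (rule topological_group_sym_diff)
  show "{} \<in> kernel"
    by (simp add: finite_in_kernel)
  show "sym_diff x y \<in> kernel" if "x \<in> kernel" "y \<in> kernel" for x y
    using that \<phi>_sym_diff[of x y] by (simp add: kernel_def)
qed

lemma kernel_approximation:
  assumes "countable A" and finite_b: "\<And>n. finite (b n)" and "y \<subseteq> A"
    and conv: "\<And>i. eventually (\<lambda>n. i \<in> b n \<longleftrightarrow> i \<in> y) F" and "F \<le> sequentially"
  obtains x y' where "\<And>n. x n \<in> kernel" "\<And>n. \<forall>i\<in>A. i \<in> x n \<longleftrightarrow> i \<in> b n" "y' \<in> kernel"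
    "\<And>i. eventually (\<lambda>n. i \<in> x n \<longleftrightarrow> i \<in> y') F"
proof -
  obtain c where c: "B c \<inter> A = {}"
    using disjoint_family_ex_disjoint[OF disjoint_blocks \<open>countable A\<close> uncountable_UNIV_nat_set]
    by blast
  \<comment> \<open>If \<open>\<phi> y\<close> holds, adding the block \<open>B c\<close> flips \<open>\<phi>\<close> of the limit without changing
    anything on \<open>A\<close>; its finite initial segments keep the approximants finite.\<close>
  define e where "e n = (if \<phi> y then initial_segment (B c) n else {})" for n
  define w where "w = (if \<phi> y then B c else {})"
  have e_w: "e n \<subseteq> B c" "w \<subseteq> B c" for n
    using initial_segment_subset[of "B c"] by (auto simp: e_def w_def)
  have "b n \<union> e n \<in> kernel" for n
    using finite_b finite_initial_segment[OF countable_block]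
    by (intro finite_in_kernel) (simp add: e_def)
  moreover have "\<forall>i\<in>A. i \<in> b n \<union> e n \<longleftrightarrow> i \<in> b n" for n
    using c e_w by blast
  moreover have "y \<union> w \<in> kernel"
  proof -
    have "countable (y \<union> w)"
      using countable_subset[OF \<open>y \<subseteq> A\<close> \<open>countable A\<close>] countable_block by (simp add: w_def)
    moreover have "y \<inter> w = {}"
      using c \<open>y \<subseteq> A\<close> e_w by blast
    then have "y \<union> w = sym_diff y w"
      by blast
    then have "\<not> \<phi> (y \<union> w)"
      using \<phi>_sym_diff \<phi>_block \<phi>_finite[of "{}"] by (simp add: w_def)
    ultimately show ?thesis
      by (simp add: kernel_def)
  qed
  moreover have "eventually (\<lambda>n. i \<in> b n \<union> e n \<longleftrightarrow> i \<in> y \<union> w) F" for i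
  proof -
    have "eventually (\<lambda>n. i \<in> e n \<longleftrightarrow> i \<in> w) F"
      using filter_leD[OF \<open>F \<le> sequentially\<close> eventually_mem_initial_segment[of i "B c"]]
      by (simp add: e_def w_def)
    with conv[of i] show ?thesis
      by eventually_elim blast
  qed
  ultimately show thesis
    by (rule that)
qed

lemma selectively_pseudocompact_kernel: "selectively_pseudocompact (pointwise_topology kernel)"
  unfolding selectively_pseudocompact_def
proof (intro allI impI)
  fix U :: "nat \<Rightarrow> 'i set set"
  assume U: "\<forall>n. openin (pointwise_topology kernel) (U n) \<and> U n \<noteq> {}"
  obtain p where p: "free_ultrafilter p"
    using free_ultrafilter_exists by blast
  have "\<exists>a F. a \<in> U n \<and> finite F \<and> cylinder kernel a F \<subseteq> U n" for n
  proof -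
    from U obtain a where "a \<in> U n"
      by blast
    with U obtain F where "finite F" "cylinder kernel a F \<subseteq> U n"
      unfolding openin_pointwise_topology by blast
    with \<open>a \<in> U n\<close> show ?thesis
      by blast
  qed
  then obtain a F where F: "\<And>n. finite (F n)" and cylU: "\<And>n. cylinder kernel (a n) (F n) \<subseteq> U n"
    by metis
  define b where "b n = a n \<inter> F n" for n
  have "countable (\<Union>n. F n)"
    using F by (simp add: countable_finite)
  moreover have "ultralimit p b \<subseteq> (\<Union>n. F n)"
    using ultralimit_subset[OF p, of b] by (auto simp: b_def)
  moreover have "finite (b n)" for n
    using F by (simp add: b_def)
  ultimately obtain x y where x: "\<And>n. x n \<in> kernel" "\<And>n. \<forall>i\<in>(\<Union>n. F n). i \<in> x n \<longleftrightarrow> i \<in> b n"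
    and "y \<in> kernel" and conv: "\<And>i. eventually (\<lambda>n. i \<in> x n \<longleftrightarrow> i \<in> y) (filter_of p)"
    using kernel_approximation eventually_mem_ultralimit[OF p] filter_of_le_sequentially[OF p]
    by metis
  have "x n \<in> cylinder kernel (a n) (F n)" for n
    using x by (auto simp: cylinder_def b_def)
  with cylU have "x n \<in> U n" for n
    by blast
  moreover have "p_limit (pointwise_topology kernel) p x y"
    unfolding p_limit_iff_limitin[OF p]
    by (rule limitin_pointwise_topologyI) (use \<open>y \<in> kernel\<close> x conv in simp_all)
  ultimately show "\<exists>x z p. (\<forall>n. x n \<in> U n) \<and> z \<in> topspace (pointwise_topology kernel) \<and>
                     free_ultrafilter p \<and> p_limit (pointwise_topology kernel) p x z"
    using p \<open>y \<in> kernel\<close> by auto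
qed

lemma not_countably_pracompact_kernel: "\<not> countably_pracompact (pointwise_topology kernel)"
proof
  assume "countably_pracompact (pointwise_topology kernel)"
  then obtain D where D: "D \<subseteq> kernel"
    and dense: "\<And>T. openin (pointwise_topology kernel) T \<Longrightarrow> T \<noteq> {} \<Longrightarrow> D \<inter> T \<noteq> {}"
    and acc: "\<And>A. A \<subseteq> D \<Longrightarrow> infinite A \<Longrightarrow> pointwise_topology kernel derived_set_of A \<noteq> {}"
    unfolding countably_pracompact_def dense_intersects_open by auto
  define z where "z = B {}"
  have "\<exists>d\<in>D. \<forall>i\<in>E. i \<in> d \<longleftrightarrow> i \<in> z" if "finite E" for E
  proof -
    have "z \<inter> E \<in> cylinder kernel (z \<inter> E) E"
      using \<open>finite E\<close> by (simp add: cylinder_def finite_in_kernel)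
    then obtain d where "d \<in> D" "d \<in> cylinder kernel (z \<inter> E) E"
      using dense[OF openin_cylinder[OF \<open>finite E\<close>]] by blast
    then show ?thesis
      by (auto simp: cylinder_def)
  qed
  moreover have "countable d" if "d \<in> D" for d
    using D that by (auto simp: kernel_def)
  ultimately obtain d where d: "range d \<subseteq> D"
    and conv: "\<And>i. eventually (\<lambda>k. i \<in> d k \<longleftrightarrow> i \<in> z) sequentially"
    using exists_pointwise_convergent_sequence[of D z] countable_block by (auto simp: z_def)
  have "d k \<in> kernel" for k
    using d D by blast
  moreover have "z \<notin> kernel"
    by (simp add: z_def block_notin_kernel)
  ultimately have "infinite (range d)" "pointwise_topology kernel derived_set_of range d = {}"
    using conv by (rule infinite_range_pointwise_limit_outside,
      rule derived_set_of_pointwise_limit_outside)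
  with acc[OF d] show False
    by blast
qed

end

(* Any injective encoding of the pairs (a, k) would do; the tag {{k}, {}} has two elements,
   so it can never coincide with {a}. *)
definition blocks :: "nat set \<Rightarrow> nat set set set set" where
  "blocks a = range (\<lambda>k. {{a}, {{k}, {}}})"

lemma block_element_eq_iff:
  "({{a}, {{k}, {}}} :: nat set set set) = {{a'}, {{k'}, {}}} \<longleftrightarrow> a = a' \<and> k = k'"
  by (auto simp: doubleton_eq_iff)

lemma disjoint_family_blocks: "disjoint_family blocks"
  unfolding disjoint_family_on_def
proof (intro ballI impI)
  fix a a' :: "nat set" assume "a \<noteq> a'"
  show "blocks a \<inter> blocks a' = {}"
  proof (rule equals0I)
    fix x assume "x \<in> blocks a \<inter> blocks a'"
    then obtain k k' where "x = {{a}, {{k}, {}}}" "x = {{a'}, {{k'}, {}}}"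
      unfolding blocks_def by blast
    then have "{{a}, {{k}, {}}} = {{a'}, {{k'}, {}}}"
      by (rule HOL.trans[OF HOL.sym])
    with \<open>a \<noteq> a'\<close> show False
      unfolding block_element_eq_iff by blast
  qed
qed

lemma infinite_blocks: "infinite (blocks a)"
  unfolding blocks_def by (rule range_inj_infinite) (simp add: inj_def block_element_eq_iff)

lemma countable_blocks: "countable (blocks a)"
  by (simp add: blocks_def)

theorem mainTheorem2:
  shows "\<exists>(G :: nat set set set set monoid) (X :: nat set set set set topology).
           topological_group G X \<and> Hausdorff_space X \<and>
           selectively_pseudocompact X \<and> \<not> countably_pracompact X"
proof -
  obtain \<phi> where "\<forall>x y. \<phi> (sym_diff x y) \<longleftrightarrow> \<phi> x \<noteq> \<phi> y"
    "\<forall>x. finite x \<longrightarrow> \<not> \<phi> x" "\<forall>a. \<phi> (blocks a)"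
    using parity_functional_exists[OF disjoint_family_blocks infinite_blocks] by blast
  then interpret parity_kernel blocks \<phi>
    by unfold_locales (simp_all add: disjoint_family_blocks countable_blocks)
  show ?thesis
    using topological_group_kernel Hausdorff_space_pointwise_topology
      selectively_pseudocompact_kernel not_countably_pracompact_kernel by blast
qed

end
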